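(* Let $Q$ be an indefinite irrational ternary quadratic form with $\det Q=1$. Then there are at most four rational isotropic lines through the origin, and at most four rational degenerate planes through the origin.
   Context: A quadratic form is rational if it is proportional to a form with rational coefficients, and irrational otherwise. A line through the origin is rational if it is spanned by a vector of $\mathbb{Z}^3$, and isotropic if $Q$ vanishes on a nonzero vector of it. A plane through the origin is rational if spanned by vectors of $\mathbb{Z}^3$, and degenerate if the restriction of $Q$ to it is the square of a linear form. *)

theory Defs
  imports "HOL-Analysis.Analysis"
begin

definition qf :: "real^3^3 \<Rightarrow> real^3 \<Rightarrow> real" where
  "qf A x = x \<bullet> (A *v x)"

definition rational_form :: "real^3^3 \<Rightarrow> bool" where
  "rational_form A \<longleftrightarrow> (\<exists>c::real. c \<noteq> 0 \<and> (\<forall>i j. c * A$i$j \<in> \<rat>))"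

definition indefinite_form :: "real^3^3 \<Rightarrow> bool" where
  "indefinite_form A \<longleftrightarrow> (\<exists>x. qf A x > 0) \<and> (\<exists>y. qf A y < 0)"

definition integral_vec :: "real^3 \<Rightarrow> bool" where
  "integral_vec v \<longleftrightarrow> (\<forall>i. v$i \<in> \<int>)"

definition rational_line :: "(real^3) set \<Rightarrow> bool" where
  "rational_line L \<longleftrightarrow> (\<exists>v. integral_vec v \<and> v \<noteq> 0 \<and> L = span {v})"

definition isotropic_line :: "real^3^3 \<Rightarrow> (real^3) set \<Rightarrow> bool" where
  "isotropic_line A L \<longleftrightarrow> (\<exists>v\<in>L. v \<noteq> 0 \<and> qf A v = 0)"

definition rational_plane :: "(real^3) set \<Rightarrow> bool" where
  "rational_plane P \<longleftrightarrow> subspace P \<and> dim P = 2 \<and>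
     (\<exists>S. (\<forall>v\<in>S. integral_vec v) \<and> P = span S)"

definition degenerate_plane :: "real^3^3 \<Rightarrow> (real^3) set \<Rightarrow> bool" where
  "degenerate_plane A P \<longleftrightarrow>
     (\<exists>(c::real) (l::real^3 \<Rightarrow> real). linear l \<and> (\<forall>x\<in>P. qf A x = c * (l x)^2))"

end

theory Submission
  imports Defs
begin

(* Three pairwise non-proportional isotropic vectors of a nondegenerate ternary form are linearly
   independent: otherwise Q would vanish on the plane they span. So three of five rational isotropic
   lines give a rational basis in which Q has zero diagonal,
   Q(x) = 2 (g1 x2 x3 + g2 x3 x1 + g3 x1 x2),
   and the other two give rational isotropic vectors p, q without zero coordinates. Then Q(p) = 0 and
   Q(q) = 0 are rational linear equations for g with coefficient vectors (p2 p3, p3 p1, p1 p2) and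
   (q2 q3, q3 q1, q1 q2), which are independent since p and q are; so g, and with it Q, is a real
   multiple of a rational form.

   If Q restricted to a plane P is c l^2, a nonzero w in P with l w = 0 is Q-orthogonal to P, so A w
   is a multiple of the normal n of P and n is isotropic for A^-1. For det A = 1 the inverse is the
   adjugate, again irrational and unimodular, and P |-> P^perp maps the degenerate rational planes of
   Q injectively to rational isotropic lines of the adjugate form. *)

unbundle cross3_syntax

definition polar :: "real^3^3 \<Rightarrow> real^3 \<Rightarrow> real^3 \<Rightarrow> real" where
  "polar A x y = x \<bullet> (A *v y)"

lemma qf_eq_polar: "qf A x = polar A x x"
  by (simp add: qf_def polar_def)

lemma polar_add_left [simp]: "polar A (x + y) z = polar A x z + polar A y z"
  and polar_add_right [simp]: "polar A z (x + y) = polar A z x + polar A z y"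
  and polar_diff_left [simp]: "polar A (x - y) z = polar A x z - polar A y z"
  and polar_diff_right [simp]: "polar A z (x - y) = polar A z x - polar A z y"
  and polar_scaleR_left [simp]: "polar A (c *\<^sub>R x) z = c * polar A x z"
  and polar_scaleR_right [simp]: "polar A z (c *\<^sub>R x) = c * polar A z x"
  unfolding polar_def
  by (simp_all add: inner_add_left inner_diff_left matrix_vector_right_distrib
      matrix_vector_mult_diff_distrib matrix_vector_mult_scaleR inner_add_right inner_diff_right)

lemma polar_commute:
  assumes "transpose A = A" shows "polar A x y = polar A y x"
  unfolding polar_def by (metis assms dot_lmul_matrix inner_commute transpose_matrix_vector)

lemma qf_add:
  assumes "transpose A = A" shows "qf A (x + y) = qf A x + 2 * polar A x y + qf A y"
  using polar_commute[OF assms, of y x] by (simp add: qf_eq_polar)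

lemma qf_diff:
  assumes "transpose A = A" shows "qf A (x - y) = qf A x - 2 * polar A x y + qf A y"
  using polar_commute[OF assms, of y x] by (simp add: qf_eq_polar)

lemma qf_scaleR [simp]: "qf A (c *\<^sub>R x) = c\<^sup>2 * qf A x"
  by (simp add: qf_eq_polar power2_eq_square)

lemma symmetric_matrix_entry: "transpose A = A \<Longrightarrow> A $ i $ j = A $ j $ i"
  by (metis transpose_def vec_lambda_beta)

lemma congruence_entry: "(M ** A ** transpose M) $ i $ j = polar A (M $ i) (M $ j)"
  unfolding polar_def matrix_matrix_mult_def transpose_def inner_vec_def matrix_vector_mult_def
  by (simp only: vec_lambda_beta sum_3 inner_real_def) algebra

lemma qf_congruence: "qf (M ** A ** transpose M) p = qf A (transpose M *v p)"
  unfolding qf_def by (simp add: matrix_vector_mul_assoc[symmetric] dot_lmul_matrix[symmetric])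

lemma det_congruence: "det (M ** A ** transpose M) = det M ^ 2 * det A"
  by (simp add: det_mul power2_eq_square)

definition rat_vec :: "real^'n \<Rightarrow> bool" where
  "rat_vec v \<longleftrightarrow> (\<forall>i. v $ i \<in> \<rat>)"

definition rat_matrix :: "real^'n^'m \<Rightarrow> bool" where
  "rat_matrix M \<longleftrightarrow> (\<forall>i. rat_vec (M $ i))"

lemma rational_form_iff_rat_matrix: "rational_form A \<longleftrightarrow> (\<exists>c. c \<noteq> 0 \<and> rat_matrix (c *\<^sub>R A))"
  by (simp add: rational_form_def rat_matrix_def rat_vec_def)

lemma integral_imp_rat_vec: "integral_vec v \<Longrightarrow> rat_vec v"
  using Ints_subset_Rats by (auto simp: integral_vec_def rat_vec_def)

lemma integral_vec_cross: "integral_vec x \<Longrightarrow> integral_vec y \<Longrightarrow> integral_vec (x \<times> y)"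
  by (simp add: integral_vec_def forall_3 cross_components Ints_diff Ints_mult)

lemma rat_vec_cross: "rat_vec x \<Longrightarrow> rat_vec y \<Longrightarrow> rat_vec (x \<times> y)"
  by (simp add: rat_vec_def forall_3 cross_components)

lemma rat_matrix_mult: "rat_matrix A \<Longrightarrow> rat_matrix B \<Longrightarrow> rat_matrix (A ** B)"
  by (simp add: rat_matrix_def rat_vec_def matrix_matrix_mult_def Rats_sum)

lemma rat_matrix_transpose: "rat_matrix A \<Longrightarrow> rat_matrix (transpose A)"
  by (simp add: rat_matrix_def rat_vec_def transpose_def)

lemma rat_vec_matrix_vector_mult: "rat_matrix M \<Longrightarrow> rat_vec x \<Longrightarrow> rat_vec (M *v x)"
  by (simp add: rat_matrix_def rat_vec_def matrix_vector_mult_def Rats_sum)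

definition adjugate3 :: "real^3^3 \<Rightarrow> real^3^3" where
  "adjugate3 A = transpose (vector [A$2 \<times> A$3, A$3 \<times> A$1, A$1 \<times> A$2])"

lemma adjugate3_mul_matrix: "adjugate3 A ** A = det A *\<^sub>R mat 1"
  unfolding vec_eq_iff forall_3 adjugate3_def
  by (simp add: matrix_matrix_mult_def sum_3 transpose_def cross_components det_3 mat_def algebra_simps)

lemma adjugate3_cancel: "adjugate3 A *v (A *v x) = det A *\<^sub>R x"
  by (simp add: matrix_vector_mul_assoc adjugate3_mul_matrix scaleR_matrix_vector_assoc[symmetric])

lemma transpose_adjugate3_cancel: "transpose M *v (transpose (adjugate3 M) *v x) = det M *\<^sub>R x"
proof -
  have "transpose M ** transpose (adjugate3 M) = det M *\<^sub>R mat 1"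
    by (metis adjugate3_mul_matrix matrix_transpose_mul transpose_mat transpose_scalar)
  then show ?thesis
    by (simp add: matrix_vector_mul_assoc scaleR_matrix_vector_assoc[symmetric] del: transpose_matrix_vector)
qed

lemma adjugate3_adjugate3: "adjugate3 (adjugate3 A) = det A *\<^sub>R A"
  unfolding vec_eq_iff forall_3 adjugate3_def
  by (simp add: transpose_def cross_components det_3 algebra_simps)

lemma det_adjugate3: "det (adjugate3 A) = (det A)\<^sup>2"
  unfolding adjugate3_def det_transpose det_3
  by (simp add: transpose_def cross_components power2_eq_square) algebra

lemma adjugate3_scaleR: "adjugate3 (c *\<^sub>R A) = c\<^sup>2 *\<^sub>R adjugate3 A"
  unfolding vec_eq_iff forall_3 adjugate3_def
  by (simp add: transpose_def cross_components power2_eq_square algebra_simps)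

lemma transpose_adjugate3:
  assumes "transpose A = A" shows "transpose (adjugate3 A) = adjugate3 A"
  using symmetric_matrix_entry[OF assms, of 2 1] symmetric_matrix_entry[OF assms, of 3 1]
    symmetric_matrix_entry[OF assms, of 3 2]
  unfolding vec_eq_iff forall_3 adjugate3_def
  by (simp add: transpose_def cross_components mult.commute)

lemma rat_matrix_adjugate3: "rat_matrix A \<Longrightarrow> rat_matrix (adjugate3 A)"
  unfolding rat_matrix_def rat_vec_def forall_3 adjugate3_def
  by (simp add: transpose_def cross_components)

lemma rational_form_adjugate3: "rational_form A \<Longrightarrow> rational_form (adjugate3 A)"
  unfolding rational_form_iff_rat_matrix
  by (metis adjugate3_scaleR power_not_zero rat_matrix_adjugate3)

lemma rational_form_congruence:
  assumes M: "rat_matrix M" "det M \<noteq> 0" and G: "rational_form (M ** A ** transpose M)"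
  shows "rational_form A"
proof -
  obtain c where c: "c \<noteq> 0" "rat_matrix (c *\<^sub>R (M ** A ** transpose M))"
    using G rational_form_iff_rat_matrix by blast
  let ?N = "adjugate3 M"
  have "?N ** (c *\<^sub>R (M ** A ** transpose M)) ** transpose ?N
      = c *\<^sub>R ((?N ** M) ** A ** transpose (?N ** M))"
    by (simp add: matrix_scalar_ac scalar_matrix_assoc matrix_mul_assoc matrix_transpose_mul)
  also have "\<dots> = (c * (det M)\<^sup>2) *\<^sub>R A"
    by (simp add: adjugate3_mul_matrix transpose_scalar power2_eq_square matrix_scalar_ac
        flip: scalar_matrix_assoc)
  finally have "rat_matrix ((c * (det M)\<^sup>2) *\<^sub>R A)"
    by (metis c(2) M(1) rat_matrix_adjugate3 rat_matrix_mult rat_matrix_transpose)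
  then show ?thesis
    unfolding rational_form_iff_rat_matrix using c(1) M(2) by (intro exI[of _ "c * (det M)\<^sup>2"]) simp
qed

lemma triple_product_expansion:
  fixes x y z u :: "real^3"
  shows "(x \<bullet> (y \<times> z)) *\<^sub>R u = ((y \<times> z) \<bullet> u) *\<^sub>R x + ((z \<times> x) \<bullet> u) *\<^sub>R y + ((x \<times> y) \<bullet> u) *\<^sub>R z"
  unfolding vec_eq_iff forall_3 inner_vec_def sum_3 by (simp add: cross_components algebra_simps)

lemma parallel_cross_if_orthogonal:
  fixes a b x :: "real^3"
  assumes "a \<bullet> x = 0" "b \<bullet> x = 0" "a \<times> b \<noteq> 0"
  shows "\<exists>c. x = c *\<^sub>R (a \<times> b)"
proof -
  have "(a \<times> b) \<times> x = 0"
    using assms(1,2) Lagrange[of x a b] cross_skew[of "a \<times> b" x] by (simp add: inner_commute)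
  then have "collinear {0, a \<times> b, x}"
    by (simp add: cross_eq_0)
  then show ?thesis
    using assms(3) by (auto simp: collinear_lemma)
qed

lemma cross_eq_0_linear_image:
  fixes f :: "real^3 \<Rightarrow> real^3"
  assumes "linear f" "x \<times> y = 0"
  shows "f x \<times> f y = 0"
  using assms by (auto simp: cross_eq_0 collinear_lemma linear_0 linear_scale)

lemma span_singleton_eq_if_cross_eq_0:
  fixes v w :: "real^3"
  assumes "v \<noteq> 0" "w \<noteq> 0" "v \<times> w = 0"
  shows "span {v} = span {w}"
proof -
  obtain c where w: "w = c *\<^sub>R v"
    using assms by (auto simp: cross_eq_0 collinear_lemma)
  with assms(2) have "v = inverse c *\<^sub>R w"
    by simp
  then have "v \<in> span {w}"
    by (metis span_base span_mul singletonI)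
  moreover have "w \<in> span {v}"
    using w by (metis span_base span_mul singletonI)
  ultimately show ?thesis
    by (simp add: span_eq)
qed

lemma isotropic_triple_independent:
  fixes x y z :: "real^3"
  assumes sym: "transpose A = A" and dA: "det A \<noteq> 0"
    and iso: "qf A x = 0" "qf A y = 0" "qf A z = 0"
    and nonpar: "x \<times> y \<noteq> 0" "x \<times> z \<noteq> 0" "y \<times> z \<noteq> 0"
  shows "x \<bullet> (y \<times> z) \<noteq> 0"
proof
  assume coplanar: "x \<bullet> (y \<times> z) = 0"
  define u where "u = y \<times> z"
  define e where "e = u \<bullet> u"
  define \<alpha> where "\<alpha> = (z \<times> u) \<bullet> x"
  define \<beta> where "\<beta> = (u \<times> y) \<bullet> x"
  have e0: "e \<noteq> 0"
    using nonpar(3) by (simp add: e_def u_def)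
  have yzu: "y \<bullet> (z \<times> u) = e"
    unfolding e_def u_def by (metis cross_triple inner_commute)
  then have ex: "e *\<^sub>R x = \<alpha> *\<^sub>R y + \<beta> *\<^sub>R z"
    using triple_product_expansion[of y z u x] coplanar
    unfolding \<alpha>_def \<beta>_def u_def by (simp add: inner_commute)
  have "\<alpha> \<noteq> 0"
  proof
    assume "\<alpha> = 0"
    then have "(e *\<^sub>R x) \<times> z = 0" by (simp add: ex cross_mult_left)
    then show False using e0 nonpar(2) by (simp add: cross_mult_left)
  qed
  moreover have "\<beta> \<noteq> 0"
  proof
    assume "\<beta> = 0"
    then have "(e *\<^sub>R x) \<times> y = 0" by (simp add: ex cross_mult_left)
    then show False using e0 nonpar(1) by (simp add: cross_mult_left)
  qed
  moreover have "qf A (\<alpha> *\<^sub>R y + \<beta> *\<^sub>R z) = 2 * \<alpha> * \<beta> * polar A y z"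
    using iso(2,3) polar_commute[OF sym, of z y] by (simp add: qf_add[OF sym] qf_eq_polar)
  ultimately have yz: "polar A y z = 0"
    using iso(1) ex by (metis qf_scaleR mult_eq_0_iff zero_neq_numeral)
  define M :: "real^3^3" where "M = vector [y, z, u]"
  have "det M = e"
    using yzu by (simp add: M_def dot_cross_det)
  then have "det (M ** A ** transpose M) \<noteq> 0"
    using e0 dA by (simp add: det_congruence)
  moreover have "det (M ** A ** transpose M) = 0"
    unfolding det_3 congruence_entry
    using iso(2,3) yz polar_commute[OF sym, of z y] by (simp add: M_def qf_eq_polar)
  ultimately show False by simp
qed

lemma rational_form_if_zero_diagonal:
  fixes G :: "real^3^3" and p q :: "real^3"
  assumes sym: "transpose G = G" and dG: "det G \<noteq> 0" and diag: "\<And>i. G $ i $ i = 0"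
    and p: "rat_vec p" "qf G p = 0" "\<And>i. p $ i \<noteq> 0"
    and q: "rat_vec q" "qf G q = 0" "\<And>i. q $ i \<noteq> 0"
    and pq: "p \<times> q \<noteq> 0"
  shows "rational_form G"
proof -
  note G_sym = symmetric_matrix_entry[OF sym]
  define g :: "real^3" where "g = vector [G$2$3, G$3$1, G$1$2]"
  define a :: "real^3 \<Rightarrow> real^3" where "a x = vector [x$2 * x$3, x$3 * x$1, x$1 * x$2]" for x
  have qf_G: "qf G x = 2 * (a x \<bullet> g)" for x
    unfolding qf_def a_def g_def inner_vec_def sum_3 matrix_vector_mult_def
    using diag G_sym[of 2 1] G_sym[of 3 1] G_sym[of 3 2] by (simp add: algebra_simps)
  have "a p \<times> a q = (\<chi> i. - (p $ i * q $ i * (p \<times> q) $ i))"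
    unfolding vec_eq_iff forall_3 by (simp add: a_def cross_components algebra_simps)
  with pq p(3) q(3) have "a p \<times> a q \<noteq> 0"
    by (auto simp: vec_eq_iff)
  then obtain c where g: "g = c *\<^sub>R (a p \<times> a q)"
    using parallel_cross_if_orthogonal[of "a p" g "a q"] p(2) q(2) qf_G by auto
  have "det G = 2 * g$1 * g$2 * g$3"
    unfolding det_3 g_def using diag G_sym[of 2 1] G_sym[of 3 1] G_sym[of 3 2] by simp
  then have "c \<noteq> 0"
    using dG g by auto
  have "rat_vec (a p \<times> a q)"
    using p(1) q(1) by (intro rat_vec_cross) (simp_all add: rat_vec_def a_def forall_3)
  then have g_rat: "g $ k / c \<in> \<rat>" for k
    using \<open>c \<noteq> 0\<close> by (simp add: g rat_vec_def)
  have "\<forall>i j. G $ i $ j / c \<in> \<rat>"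
    using g_rat[of 1] g_rat[of 2] g_rat[of 3] diag G_sym[of 2 1] G_sym[of 3 2] G_sym[of 1 3]
    by (simp add: forall_3 g_def)
  then show ?thesis
    unfolding rational_form_def using \<open>c \<noteq> 0\<close> by (intro exI[of _ "1 / c"]) simp
qed

lemma rational_form_if_isotropic_frame:
  fixes A M :: "real^3^3" and x y :: "real^3"
  assumes sym: "transpose A = A" and dA: "det A \<noteq> 0"
    and M: "rat_matrix M" "det M \<noteq> 0" "\<And>i. qf A (M $ i) = 0"
    and x: "rat_vec x" "qf A x = 0" "\<And>i j. i \<noteq> j \<Longrightarrow> (M $ i \<times> M $ j) \<bullet> x \<noteq> 0"
    and y: "rat_vec y" "qf A y = 0" "\<And>i j. i \<noteq> j \<Longrightarrow> (M $ i \<times> M $ j) \<bullet> y \<noteq> 0"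
    and xy: "x \<times> y \<noteq> 0"
  shows "rational_form A"
proof -
  define coords where "coords v = transpose (adjugate3 M) *v v" for v
  have coords_components: "coords v = vector [(M$2 \<times> M$3) \<bullet> v, (M$3 \<times> M$1) \<bullet> v, (M$1 \<times> M$2) \<bullet> v]" for v
    by (simp add: coords_def adjugate3_def vec_eq_iff forall_3 matrix_vector_mult_def inner_vec_def)
  have expansion: "transpose M *v coords v = det M *\<^sub>R v" for v
    unfolding coords_def by (rule transpose_adjugate3_cancel)
  have coords_rat: "rat_vec (coords v)" if "rat_vec v" for v
    using M(1) that
    by (simp add: coords_def rat_vec_matrix_vector_mult rat_matrix_transpose rat_matrix_adjugate3
        del: transpose_matrix_vector)
  define G where "G = M ** A ** transpose M"
  have coords_iso: "qf G (coords v) = 0" if "qf A v = 0" for v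
    using that unfolding G_def qf_congruence expansion by simp
  have "rational_form G"
  proof (rule rational_form_if_zero_diagonal)
    show "transpose G = G"
      using sym by (simp add: G_def matrix_transpose_mul matrix_mul_assoc)
    show "det G \<noteq> 0"
      using M(2) dA by (simp add: G_def det_congruence)
    show "G $ i $ i = 0" for i
      using M(3) by (simp add: G_def congruence_entry qf_eq_polar)
    show "coords x $ i \<noteq> 0" "coords y $ i \<noteq> 0" for i
      using exhaust_3[of i] x(3) y(3) by (auto simp: coords_components)
    show "coords x \<times> coords y \<noteq> 0"
    proof
      assume "coords x \<times> coords y = 0"
      then have "(det M *\<^sub>R x) \<times> (det M *\<^sub>R y) = 0"
        using cross_eq_0_linear_image[OF matrix_vector_mul_linear] by (metis expansion)
      then show False
        using M(2) xy by (simp add: cross_mult_left cross_mult_right)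
    qed
  qed (use x y coords_rat coords_iso in auto)
  then show ?thesis
    using M by (simp add: G_def rational_form_congruence)
qed

lemma rational_form_if_five_isotropic:
  fixes A :: "real^3^3" and V :: "(real^3) set"
  assumes sym: "transpose A = A" and dA: "det A \<noteq> 0"
    and V: "card V = 5" "\<And>v. v \<in> V \<Longrightarrow> integral_vec v \<and> qf A v = 0"
    and nonpar: "pairwise (\<lambda>v w. v \<times> w \<noteq> 0) V"
  shows "rational_form A"
proof -
  have "\<exists>v1 v2 v3 v4 v5. V = {v1, v2, v3, v4, v5} \<and> distinct [v1, v2, v3, v4, v5]"
    using V(1) by (simp add: numeral_eq_Suc card_Suc_eq) fastforce
  then obtain v1 v2 v3 v4 v5 where V_eq: "V = {v1, v2, v3, v4, v5}"
    and dist: "distinct [v1, v2, v3, v4, v5]"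
    by blast
  have iso: "rat_vec v" "qf A v = 0" if "v \<in> V" for v
    using V(2) that by (simp_all add: integral_imp_rat_vec)
  have indep: "(x \<times> y) \<bullet> z \<noteq> 0" if "x \<in> V" "y \<in> V" "z \<in> V" "distinct [x, y, z]" for x y z
  proof -
    have "x \<bullet> (y \<times> z) \<noteq> 0"
      using isotropic_triple_independent[OF sym dA] iso nonpar that by (simp add: pairwise_def)
    then show ?thesis
      by (metis cross_triple inner_commute)
  qed
  define M :: "real^3^3" where "M = vector [v1, v2, v3]"
  have "det M = (v1 \<times> v2) \<bullet> v3"
    by (metis M_def cross_triple dot_cross_det inner_commute)
  then have "rat_matrix M" "det M \<noteq> 0"
    using iso indep[of v1 v2 v3] dist by (auto simp: M_def V_eq rat_matrix_def forall_3)
  moreover have "qf A (M $ i) = 0" for i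
    using exhaust_3[of i] iso(2) by (auto simp: M_def V_eq)
  moreover have "(M $ i \<times> M $ j) \<bullet> v \<noteq> 0" if "v \<in> {v4, v5}" "i \<noteq> j" for v i j
    using that exhaust_3[of i] exhaust_3[of j] dist indep[of v1 v2 v] indep[of v2 v3 v] indep[of v3 v1 v]
      indep[of v2 v1 v] indep[of v3 v2 v] indep[of v1 v3 v]
    by (auto simp: M_def V_eq)
  moreover have "v4 \<times> v5 \<noteq> 0"
    using nonpar dist by (simp add: V_eq pairwise_def)
  ultimately show ?thesis
    using rational_form_if_isotropic_frame[OF sym dA, of M v4 v5] iso by (simp add: V_eq)
qed

lemma finite_card_le_if_no_subset_card_Suc:
  assumes "\<And>T. T \<subseteq> S \<Longrightarrow> card T = Suc n \<Longrightarrow> False"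
  shows "finite S \<and> card S \<le> n"
proof (rule ccontr)
  assume "\<not> (finite S \<and> card S \<le> n)"
  then obtain T where "T \<subseteq> S" "card T = Suc n"
    by (metis Suc_leI infinite_arbitrarily_large not_le obtain_subset_with_card_n)
  with assms show False .
qed

lemma rational_isotropic_lineE:
  assumes "rational_line L" "isotropic_line A L"
  obtains v where "integral_vec v" "v \<noteq> 0" "L = span {v}" "qf A v = 0"
proof -
  obtain v where v: "integral_vec v" "v \<noteq> 0" "L = span {v}"
    using assms(1) by (auto simp: rational_line_def)
  obtain u where u: "u \<in> L" "u \<noteq> 0" "qf A u = 0"
    using assms(2) by (auto simp: isotropic_line_def)
  obtain c where "u = c *\<^sub>R v"
    using u(1) v(3) span_singleton by blast
  with u have "qf A v = 0"
    by simp
  with v that show ?thesis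
    by blast
qed

lemma finite_card_rational_isotropic_lines:
  fixes A :: "real^3^3"
  assumes sym: "transpose A = A" and dA: "det A \<noteq> 0" and irr: "\<not> rational_form A"
  shows "finite {L. rational_line L \<and> isotropic_line A L}
    \<and> card {L. rational_line L \<and> isotropic_line A L} \<le> 4"
proof (rule finite_card_le_if_no_subset_card_Suc)
  fix T assume T: "T \<subseteq> {L. rational_line L \<and> isotropic_line A L}" "card T = Suc 4"
  have "\<exists>v. integral_vec v \<and> v \<noteq> 0 \<and> L = span {v} \<and> qf A v = 0" if "L \<in> T" for L
    using T(1) that by (blast elim: rational_isotropic_lineE)
  then obtain rep where rep: "\<And>L. L \<in> T \<Longrightarrow>
      integral_vec (rep L) \<and> rep L \<noteq> 0 \<and> L = span {rep L} \<and> qf A (rep L) = 0"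
    by metis
  have "inj_on rep T"
    using rep by (metis inj_onI)
  moreover have "rep L \<times> rep L' \<noteq> 0" if "L \<in> T" "L' \<in> T" "rep L \<noteq> rep L'" for L L'
    using rep[OF that(1)] rep[OF that(2)] that(3) span_singleton_eq_if_cross_eq_0 by metis
  then have "pairwise (\<lambda>v w. v \<times> w \<noteq> 0) (rep ` T)"
    by (auto simp: pairwise_def)
  ultimately have "rational_form A"
    using T(2) rep by (intro rational_form_if_five_isotropic[OF sym dA]) (auto simp: card_image)
  with irr show False ..
qed

lemma rational_planeE:
  assumes "rational_plane P"
  obtains s1 s2 where "integral_vec s1" "integral_vec s2" "s1 \<times> s2 \<noteq> 0" "P = span {s1, s2}"
proof -
  obtain S where S: "\<forall>v\<in>S. integral_vec v" "P = span S" and "dim P = 2"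
    using assms by (auto simp: rational_plane_def)
  obtain B where B: "B \<subseteq> S" "independent B" "S \<subseteq> span B" "card B = dim S"
    by (rule basis_exists)
  with S(2) \<open>dim P = 2\<close> obtain s1 s2 where s: "B = {s1, s2}" "s1 \<noteq> s2"
    by (metis card_2_iff dim_span)
  have "P = span {s1, s2}"
    unfolding S(2) s(1)[symmetric] span_eq using B(1,3) span_superset by blast
  moreover have "s1 \<times> s2 \<noteq> 0"
  proof
    assume "s1 \<times> s2 = 0"
    then have "collinear {0, s2, s1}"
      by (metis cross_eq_0 cross_skew neg_0_equal_iff_equal)
    moreover have "s2 \<noteq> 0" "s1 \<notin> span {s2}"
      using B(2) s by (auto simp: independent_insert dependent_zero)
    ultimately show False
      by (auto simp: collinear_lemma span_base span_mul span_zero)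
  qed
  ultimately show ?thesis
    using that S(1) B(1) s(1) by blast
qed

lemma orthogonal_comp_span_pair:
  fixes s1 s2 :: "real^3"
  assumes "s1 \<times> s2 \<noteq> 0"
  shows "orthogonal_comp (span {s1, s2}) = span {s1 \<times> s2}"
proof
  show "orthogonal_comp (span {s1, s2}) \<subseteq> span {s1 \<times> s2}"
  proof
    fix y assume "y \<in> orthogonal_comp (span {s1, s2})"
    then have "s1 \<bullet> y = 0" "s2 \<bullet> y = 0"
      by (auto simp: orthogonal_comp_def orthogonal_def span_base)
    then obtain c where "y = c *\<^sub>R (s1 \<times> s2)"
      using parallel_cross_if_orthogonal assms by blast
    then show "y \<in> span {s1 \<times> s2}"
      by (simp add: span_base span_mul)
  qed
  have "span {s1, s2} \<subseteq> orthogonal_comp {s1 \<times> s2}"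
    by (rule span_minimal)
      (auto simp: subspace_hyperplane orthogonal_comp_def orthogonal_def dot_cross_self)
  then have "s1 \<times> s2 \<in> orthogonal_comp (span {s1, s2})"
    by (auto simp: orthogonal_comp_def orthogonal_def inner_commute)
  then show "span {s1 \<times> s2} \<subseteq> orthogonal_comp (span {s1, s2})"
    by (simp add: span_minimal subspace_orthogonal_comp)
qed

lemma linear_functional_vanishes_in_plane:
  fixes l :: "real^3 \<Rightarrow> real"
  assumes "linear l" "s1 \<times> s2 \<noteq> 0"
  obtains w where "w \<in> span {s1, s2}" "w \<noteq> 0" "l w = 0"
proof (cases "l s1 = 0")
  case True
  then show ?thesis
    using that[of s1] assms(2) by (metis cross_zero_left insertI1 span_base)
next
  case False
  define w where "w = l s2 *\<^sub>R s1 - l s1 *\<^sub>R s2"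
  have "w \<times> s1 = l s1 *\<^sub>R (s1 \<times> s2)"
    by (simp add: w_def Cross3.left_diff_distrib cross_mult_left) (metis cross_skew scaleR_minus_right)
  then have "w \<noteq> 0"
    using False assms(2) by auto
  moreover have "w \<in> span {s1, s2}"
    by (simp add: w_def span_diff span_mul span_base)
  moreover have "l w = 0"
    using assms(1) by (simp add: w_def linear_diff linear_scale)
  ultimately show ?thesis
    using that by blast
qed

lemma degenerate_plane_normal_isotropic:
  fixes s1 s2 :: "real^3"
  assumes sym: "transpose A = A" and dA: "det A \<noteq> 0" and n: "s1 \<times> s2 \<noteq> 0"
    and deg: "degenerate_plane A (span {s1, s2})"
  shows "qf (adjugate3 A) (s1 \<times> s2) = 0"
proof -
  let ?P = "span {s1, s2}" and ?n = "s1 \<times> s2"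
  obtain c l where "linear l" and Q: "\<And>x. x \<in> ?P \<Longrightarrow> qf A x = c * (l x)\<^sup>2"
    using deg by (auto simp: degenerate_plane_def)
  obtain w where w: "w \<in> ?P" "w \<noteq> 0" "l w = 0"
    using linear_functional_vanishes_in_plane[OF \<open>linear l\<close> n] by blast
  have radical: "polar A w y = 0" if "y \<in> ?P" for y
  proof -
    have "qf A (w + y) = qf A (w - y)"
      using Q[of "w + y"] Q[of "w - y"] w that \<open>linear l\<close>
      by (simp add: span_add span_diff linear_add linear_diff)
    then show ?thesis
      by (simp add: qf_add[OF sym] qf_diff[OF sym])
  qed
  have "s1 \<bullet> (A *v w) = 0" "s2 \<bullet> (A *v w) = 0"
    using radical[of s1] radical[of s2] polar_commute[OF sym, of w]
    by (simp_all add: polar_def span_base)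
  then obtain \<mu> where \<mu>: "A *v w = \<mu> *\<^sub>R ?n"
    using parallel_cross_if_orthogonal n by blast
  have "\<mu> \<noteq> 0"
    using adjugate3_cancel[of A w] \<mu> dA w(2) by auto
  have adj_n: "\<mu> *\<^sub>R (adjugate3 A *v ?n) = det A *\<^sub>R w"
    using adjugate3_cancel[of A w] by (simp add: \<mu> matrix_vector_mult_scaleR)
  have "?n \<in> orthogonal_comp ?P"
    using orthogonal_comp_span_pair[OF n] by (simp add: span_base)
  then have "w \<bullet> ?n = 0"
    using w(1) by (auto simp: orthogonal_comp_def orthogonal_def)
  have "\<mu> * qf (adjugate3 A) ?n = ?n \<bullet> (\<mu> *\<^sub>R (adjugate3 A *v ?n))"
    by (simp add: qf_def)
  also have "\<dots> = det A * (w \<bullet> ?n)"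
    by (simp add: adj_n inner_commute)
  finally show ?thesis
    using \<open>\<mu> \<noteq> 0\<close> \<open>w \<bullet> ?n = 0\<close> by simp
qed

lemma orthogonal_comp_rational_degenerate_plane:
  assumes sym: "transpose A = A" and dA: "det A \<noteq> 0"
    and P: "rational_plane P" "degenerate_plane A P"
  shows "rational_line (orthogonal_comp P) \<and> isotropic_line (adjugate3 A) (orthogonal_comp P)"
proof -
  obtain s1 s2 where s: "integral_vec s1" "integral_vec s2" "s1 \<times> s2 \<noteq> 0" "P = span {s1, s2}"
    using P(1) by (rule rational_planeE)
  then have "orthogonal_comp P = span {s1 \<times> s2}"
    by (simp add: orthogonal_comp_span_pair)
  moreover have "qf (adjugate3 A) (s1 \<times> s2) = 0"
    using degenerate_plane_normal_isotropic[OF sym dA s(3)] P(2) s(4) by simp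
  ultimately show ?thesis
    using s integral_vec_cross
    by (auto simp: rational_line_def isotropic_line_def intro: span_base)
qed

theorem lemma2p2:
  fixes A :: "real^3^3"
  assumes "transpose A = A"
    and "indefinite_form A"
    and "\<not> rational_form A"
    and "det A = 1"
  shows "finite {L. rational_line L \<and> isotropic_line A L}
         \<and> card {L. rational_line L \<and> isotropic_line A L} \<le> 4
         \<and> finite {P. rational_plane P \<and> degenerate_plane A P}
         \<and> card {P. rational_plane P \<and> degenerate_plane A P} \<le> 4"
proof -
  note sym = assms(1) and irr = assms(3) and det1 = assms(4)
  define B where "B = adjugate3 A"
  have symB: "transpose B = B"
    using transpose_adjugate3[OF sym] by (simp add: B_def)
  have detB: "det B = 1"
    by (simp add: B_def det_adjugate3 det1)
  have irrB: "\<not> rational_form B"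
    using irr rational_form_adjugate3[of B] by (auto simp: B_def adjugate3_adjugate3 det1)
  let ?lines = "\<lambda>M. {L. rational_line L \<and> isotropic_line M L}"
  let ?planes = "{P. rational_plane P \<and> degenerate_plane A P}"
  have lines: "finite (?lines A) \<and> card (?lines A) \<le> 4"
    using finite_card_rational_isotropic_lines[OF sym _ irr] det1 by simp
  have linesB: "finite (?lines B) \<and> card (?lines B) \<le> 4"
    using finite_card_rational_isotropic_lines[OF symB _ irrB] detB by simp
  have "inj_on orthogonal_comp ?planes"
    by (rule inj_onI) (metis mem_Collect_eq orthogonal_comp_self rational_plane_def)
  moreover have "orthogonal_comp ` ?planes \<subseteq> ?lines B"
    using orthogonal_comp_rational_degenerate_plane[OF sym] det1 by (auto simp: B_def)
  ultimately have "finite ?planes" "card ?planes \<le> card (?lines B)"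
    using linesB by (auto intro: inj_on_finite card_inj_on_le)
  with lines linesB show ?thesis
    by simp
qed

end
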